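(* For $n=1$, the Kähler-Ricci soliton metric $g$ described in the context satisfies, for every tangent 2-plane $\alpha$ at every point, $$-\tfrac23<\mathrm{Sec}(\alpha)<0,$$ and both bounds are sharp (the infimum of sectional curvatures over $M$ is $-2/3$ and the supremum is $0$).
   Context: $\mathcal H_3$ is the 3-dimensional Heisenberg group with coordinates $(x,y,z)$ and left-invariant coframe $\sigma=dx$, $\rho=dy$, $\zeta=x\,dy-dz$. $F_1(\phi)=\frac{4}{\phi}\big[1-\phi+\frac{\phi^2}{2}-e^{-\phi}\big]$ for $\phi>0$. On $M=\mathcal H_3\times(0,\infty)$, with $\phi$ the coordinate on $(0,\infty)$, $g=\phi(\sigma^2+\rho^2)+F_1(\phi)\zeta^2+\frac{1}{F_1(\phi)}d\phi^2$; this is a complete Kähler metric (Kähler form $d(\phi\zeta)$) which together with $f=-\phi$ is an expanding gradient Kähler-Ricci soliton, $\mathrm{Ric}+\nabla df=-g$. *)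

theory Defs
  imports "HOL-Analysis.Analysis"
begin

text \<open>Coordinates on M = H_3 x (0,oo) as points of real^4:
  p$0 = x, p$1 = y, p$2 = z, p$3 = phi.\<close>

type_synonym pt = "real ^ 4"
type_synonym metric = "pt \<Rightarrow> real ^ 4 ^ 4"

definition F1 :: "real \<Rightarrow> real" where
  "F1 \<phi> = 4 / \<phi> * (1 - \<phi> + \<phi>^2 / 2 - exp (- \<phi>))"

definition M :: "pt set" where
  "M = {p. p $ 3 > 0}"

text \<open>Left-invariant coframe on H_3 and d phi, as covectors (coefficients w.r.t. dx,dy,dz,dphi).\<close>
definition cf_sigma :: "pt \<Rightarrow> real ^ 4" where
  "cf_sigma p = (\<chi> i. if i = 0 then 1 else 0)"
definition cf_rho :: "pt \<Rightarrow> real ^ 4" where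
  "cf_rho p = (\<chi> i. if i = 1 then 1 else 0)"
definition cf_zeta :: "pt \<Rightarrow> real ^ 4" where
  "cf_zeta p = (\<chi> i. if i = 1 then p $ 0 else if i = 2 then -1 else 0)"
definition cf_dphi :: "pt \<Rightarrow> real ^ 4" where
  "cf_dphi p = (\<chi> i. if i = 3 then 1 else 0)"

definition soliton_metric :: metric where
  "soliton_metric p = (\<chi> i j.
      p $ 3 * (cf_sigma p $ i * cf_sigma p $ j + cf_rho p $ i * cf_rho p $ j)
    + F1 (p $ 3) * (cf_zeta p $ i * cf_zeta p $ j)
    + 1 / F1 (p $ 3) * (cf_dphi p $ i * cf_dphi p $ j))"

definition pd :: "(pt \<Rightarrow> real) \<Rightarrow> 4 \<Rightarrow> pt \<Rightarrow> real" where
  "pd f i p = deriv (\<lambda>t. f (p + t *\<^sub>R axis i 1)) 0"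

definition christoffel :: "metric \<Rightarrow> pt \<Rightarrow> 4 \<Rightarrow> 4 \<Rightarrow> 4 \<Rightarrow> real" where
  "christoffel G p k i j = 1/2 * (\<Sum>l\<in>UNIV. matrix_inv (G p) $ k $ l *
      (pd (\<lambda>q. G q $ j $ l) i p + pd (\<lambda>q. G q $ i $ l) j p - pd (\<lambda>q. G q $ i $ j) l p))"

text \<open>R(d_i,d_j) d_k = sum_l riem i j k l d_l, with R(X,Y)Z = nabla_X nabla_Y Z - nabla_Y nabla_X Z - nabla_[X,Y] Z.\<close>
definition riem :: "metric \<Rightarrow> pt \<Rightarrow> 4 \<Rightarrow> 4 \<Rightarrow> 4 \<Rightarrow> 4 \<Rightarrow> real" where
  "riem G p i j k l =
     pd (\<lambda>q. christoffel G q l j k) i p - pd (\<lambda>q. christoffel G q l i k) j p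
   + (\<Sum>m\<in>UNIV. christoffel G p m j k * christoffel G p l i m
               - christoffel G p m i k * christoffel G p l j m)"

definition gprod :: "metric \<Rightarrow> pt \<Rightarrow> real ^ 4 \<Rightarrow> real ^ 4 \<Rightarrow> real" where
  "gprod G p u v = (\<Sum>i\<in>UNIV. \<Sum>j\<in>UNIV. G p $ i $ j * u $ i * v $ j)"

definition sec_curv :: "metric \<Rightarrow> pt \<Rightarrow> real ^ 4 \<Rightarrow> real ^ 4 \<Rightarrow> real" where
  "sec_curv G p u v =
     (\<Sum>i\<in>UNIV. \<Sum>j\<in>UNIV. \<Sum>k\<in>UNIV. \<Sum>l\<in>UNIV. \<Sum>m\<in>UNIV.
        u $ i * v $ j * v $ k * riem G p i j k l * G p $ l $ m * u $ m)
     / (gprod G p u u * gprod G p v v - (gprod G p u v)^2)"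

definition plane_pair :: "real ^ 4 \<Rightarrow> real ^ 4 \<Rightarrow> bool" where
  "plane_pair u v \<longleftrightarrow> u \<noteq> v \<and> independent {u, v}"

end

theory Submission
  imports Defs
begin

(* In the orthonormal coframe e1 = sqrt phi sigma, e2 = sqrt phi rho, e3 = sqrt F1 zeta,
   e4 = dphi / sqrt F1, write a plane u, v through its bivector: a is its e1/\e2 component,
   b its e3/\e4 component and s the squared norm of its four mixed components.  A direct
   computation of the curvature tensor, simplified by the Plucker relation, gives
     Sec = (A a^2 + B b^2 + 6 D a b - D s) / (a^2 + b^2 + s)
   with A = -F1/phi^2, B = -F1''/2 and D = (phi F1' - F1) / (4 phi^2).  Elementary estimates
   of exp show -2/3 < A, B < 0, 0 < D < 1/6 and 4 D^2 < A B, and the Plucker relation with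
   AM-GM gives 2 |a b| <= s; together these force -2/3 < Sec < 0.  The bound -2/3 is
   approached by the planes span{d_x, d_y} as phi -> 0 (Sec = A), and 0 by the planes
   span{d_x, d_z} as phi -> oo (Sec = -D). *)

lemma less_from_0_by_deriv:
  fixes f g f' g' :: "real \<Rightarrow> real"
  assumes "f 0 \<le> g 0"
    and "\<And>y. (f has_real_derivative f' y) (at y)" "\<And>y. (g has_real_derivative g' y) (at y)"
    and "\<And>y. 0 < y \<Longrightarrow> f' y < g' y" and "0 < x"
  shows "f x < g x"
proof -
  have "(\<lambda>y. g y - f y) 0 < (\<lambda>y. g y - f y) x"
  proof (rule DERIV_pos_imp_increasing_open[OF \<open>0 < x\<close>])
    show "\<exists>z. ((\<lambda>y. g y - f y) has_real_derivative z) (at y) \<and> 0 < z" if "0 < y" for y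
      using assms(2-4) that by (metis DERIV_diff diff_gt_0_iff_gt)
    show "continuous_on {0..x} (\<lambda>y. g y - f y)"
      using assms(2,3) by (intro continuous_at_imp_continuous_on ballI continuous_diff DERIV_isCont)
  qed
  with \<open>f 0 \<le> g 0\<close> show ?thesis by simp
qed

lemma binary_form_neg_definite:
  fixes A B D a b :: real
  assumes "A < 0" and "4 * D^2 < A * B" and "a \<noteq> 0 \<or> b \<noteq> 0"
  shows "A * a^2 + 4 * D * a * b + B * b^2 < 0"
proof -
  have "0 < (A * a + 2 * D * b)^2 + (A * B - 4 * D^2) * b^2"
  proof (cases "b = 0")
    case True
    with assms show ?thesis by simp
  next
    case False
    with assms(2) have "0 < (A * B - 4 * D^2) * b^2" by simp
    then show ?thesis
      by (simp add: add_nonneg_pos)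
  qed
  also have "\<dots> = A * (A * a^2 + 4 * D * a * b + B * b^2)"
    by (simp add: algebra_simps power2_eq_square)
  finally show ?thesis
    using \<open>A < 0\<close> by (simp add: zero_less_mult_iff)
qed

lemma two_abs_mult_le_weighted_squares:
  fixes c m n :: real
  assumes "0 < c"
  shows "2 * \<bar>m * n\<bar> \<le> c * m^2 + n^2 / c"
proof -
  have "0 \<le> (c * \<bar>m\<bar> - \<bar>n\<bar>)^2 / c"
    using assms by simp
  also have "\<dots> = c * m^2 + n^2 / c - 2 * \<bar>m * n\<bar>"
    using assms by (simp add: field_simps power2_eq_square abs_mult)
  finally show ?thesis by simp
qed

lemma scaleR_eq_if_minors_zero:
  fixes a b :: "real^'n"
  assumes "a $ k \<noteq> 0" and "\<And>i j. a $ i * b $ j = a $ j * b $ i"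
  shows "b = (b $ k / a $ k) *\<^sub>R a"
  unfolding vec_eq_iff
proof
  fix i
  from assms(2)[of k i] assms(1) show "b $ i = ((b $ k / a $ k) *\<^sub>R a) $ i"
    by (simp add: field_simps)
qed

lemma curvature_form_neg:
  fixes A B D a b s :: real
  assumes "A < 0" and "0 < D" and "4 * D^2 < A * B"
    and "2 * \<bar>a * b\<bar> \<le> s" and "0 < a^2 + b^2 + s"
  shows "A * a^2 + B * b^2 + 6 * D * a * b - D * s < 0"
proof (cases "a = 0 \<and> b = 0")
  case True
  with assms show ?thesis by simp
next
  case False
  have "6 * D * (a * b) \<le> 6 * D * \<bar>a * b\<bar>" "D * (2 * \<bar>a * b\<bar>) \<le> D * s"
    using assms by (intro mult_left_mono; simp)+
  then have "6 * D * (a * b) - D * s \<le> 4 * D * (\<bar>a\<bar> * \<bar>b\<bar>)"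
    by (simp add: abs_mult)
  moreover have "A * \<bar>a\<bar>^2 + 4 * D * \<bar>a\<bar> * \<bar>b\<bar> + B * \<bar>b\<bar>^2 < 0"
    using False assms by (intro binary_form_neg_definite) auto
  ultimately show ?thesis
    by (simp add: algebra_simps)
qed

lemma curvature_form_gt:
  fixes A B D a b s :: real
  assumes "- (2/3) < A" and "- (2/3) < B" and "0 \<le> D" and "D \<le> 1/6"
    and "2 * \<bar>a * b\<bar> \<le> s" and "0 < a^2 + b^2 + s"
  shows "- (2/3) * (a^2 + b^2 + s) < A * a^2 + B * b^2 + 6 * D * a * b - D * s"
proof -
  have "0 < (A + 2/3) * a^2 + (B + 2/3) * b^2 + (2/3 - D) * (s - 2 * \<bar>a * b\<bar>)"
  proof (cases "a = 0 \<and> b = 0")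
    case True
    with assms show ?thesis by simp
  next
    case False
    then have "0 < (A + 2/3) * a^2 + (B + 2/3) * b^2"
      using assms by (auto intro: add_pos_nonneg add_nonneg_pos)
    moreover have "0 \<le> (2/3 - D) * (s - 2 * \<bar>a * b\<bar>)"
      using assms by simp
    ultimately show ?thesis by linarith
  qed
  also have "\<dots> \<le> (A + 2/3) * a^2 + (B + 2/3) * b^2 + (2/3 - D) * s + 6 * D * (a * b)"
  proof -
    have "(4/3 - 8 * D) * \<bar>a * b\<bar> \<ge> 0"
      using assms by simp
    moreover have "- (6 * D * \<bar>a * b\<bar>) \<le> 6 * D * (a * b)"
      using assms mult_left_mono[OF abs_ge_minus_self[of "a * b"], of "6 * D"] by simp
    ultimately show ?thesis
      by (simp add: algebra_simps)
  qed
  finally show ?thesis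
    by (simp add: algebra_simps)
qed

lemma cInf_eq_approx:
  fixes X :: "real set"
  assumes "\<And>x. x \<in> X \<Longrightarrow> a \<le> x" and "\<And>e. 0 < e \<Longrightarrow> \<exists>x\<in>X. x < a + e"
  shows "Inf X = a"
proof (rule cInf_eq_non_empty)
  show "X \<noteq> {}"
    using assms(2)[of 1] by auto
  show "y \<le> a" if "\<And>x. x \<in> X \<Longrightarrow> y \<le> x" for y
  proof (rule ccontr)
    assume "\<not> y \<le> a"
    then obtain x where "x \<in> X" "x < a + (y - a)"
      using assms(2)[of "y - a"] by auto
    with that[of x] show False by simp
  qed
qed (use assms in auto)

lemma cSup_eq_approx:
  fixes X :: "real set"
  assumes "\<And>x. x \<in> X \<Longrightarrow> x \<le> a" and "\<And>e. 0 < e \<Longrightarrow> \<exists>x\<in>X. a - e < x"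
  shows "Sup X = a"
proof (rule cSup_eq_non_empty)
  show "X \<noteq> {}"
    using assms(2)[of 1] by auto
  show "a \<le> y" if "\<And>x. x \<in> X \<Longrightarrow> x \<le> y" for y
  proof (rule ccontr)
    assume "\<not> a \<le> y"
    then obtain x where "x \<in> X" "a - (a - y) < x"
      using assms(2)[of "a - y"] by auto
    with that[of x] show False by simp
  qed
qed (use assms in auto)

lemma one_minus_less_exp_minus: "0 < (y::real) \<Longrightarrow> 1 - y < exp (- y)"
  by (rule less_from_0_by_deriv[of "\<lambda>y. 1 - y" "\<lambda>y. exp (- y)" "\<lambda>_. -1" "\<lambda>y. - exp (- y)"])
     (auto intro!: derivative_eq_intros)

lemma exp_minus_less_Taylor_2: "0 < (y::real) \<Longrightarrow> exp (- y) < 1 - y + y^2/2"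
  by (rule less_from_0_by_deriv[of "\<lambda>y. exp (- y)" "\<lambda>y. 1 - y + y^2/2" "\<lambda>y. - exp (- y)" "\<lambda>y. y - 1"])
     (auto intro!: derivative_eq_intros dest: one_minus_less_exp_minus)

lemma Taylor_3_less_exp_minus: "0 < (y::real) \<Longrightarrow> 1 - y + y^2/2 - y^3/6 < exp (- y)"
  by (rule less_from_0_by_deriv[of "\<lambda>y. 1 - y + y^2/2 - y^3/6" "\<lambda>y. exp (- y)"
        "\<lambda>y. - 1 + y - y^2/2" "\<lambda>y. - exp (- y)"])
     (auto intro!: derivative_eq_intros dest: exp_minus_less_Taylor_2)

lemma exp_minus_less_Taylor_4: "0 < (y::real) \<Longrightarrow> exp (- y) < 1 - y + y^2/2 - y^3/6 + y^4/24"
  by (rule less_from_0_by_deriv[of "\<lambda>y. exp (- y)" "\<lambda>y. 1 - y + y^2/2 - y^3/6 + y^4/24"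
        "\<lambda>y. - exp (- y)" "\<lambda>y. - 1 + y - y^2/2 + y^3/6"])
     (auto intro!: derivative_eq_intros dest: Taylor_3_less_exp_minus)

lemma exp_minus_mult_linear_less: "0 < (y::real) \<Longrightarrow> (y + 1) * exp (- y) < 1"
  by (rule less_from_0_by_deriv[of "\<lambda>y. (y + 1) * exp (- y)" "\<lambda>_. 1" "\<lambda>y. - y * exp (- y)" "\<lambda>_. 0"])
     (auto intro!: derivative_eq_intros simp: algebra_simps)

lemma exp_minus_mult_quadratic_less: "0 < (y::real) \<Longrightarrow> exp (- y) * (y^2 + 2*y + 2) < 2"
  by (rule less_from_0_by_deriv[of "\<lambda>y. exp (- y) * (y^2 + 2*y + 2)" "\<lambda>_. 2"
        "\<lambda>y. - exp (- y) * y^2" "\<lambda>_. 0"])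
     (auto intro!: derivative_eq_intros simp: algebra_simps power2_eq_square)

lemma exp_minus_mult_quadratic_gt: "0 < (y::real) \<Longrightarrow> 2 - y^3/3 < exp (- y) * (y^2 + 2*y + 2)"
  by (rule less_from_0_by_deriv[of "\<lambda>y. 2 - y^3/3" "\<lambda>y. exp (- y) * (y^2 + 2*y + 2)"
        "\<lambda>y. - (y^2)" "\<lambda>y. - exp (- y) * y^2"])
     (auto intro!: derivative_eq_intros simp: algebra_simps power2_eq_square)

lemma exp_minus_mult_linear_gt: "0 < (y::real) \<Longrightarrow> 0 < y - 2 + (y + 2) * exp (- y)"
  by (rule less_from_0_by_deriv[of "\<lambda>_. 0" "\<lambda>y. y - 2 + (y + 2) * exp (- y)"
        "\<lambda>_. 0" "\<lambda>y. 1 - (y + 1) * exp (- y)"])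
     (auto intro!: derivative_eq_intros simp: algebra_simps dest: exp_minus_mult_linear_less)

lemma exp_minus_mult_linear_less_cubic: "0 < (y::real) \<Longrightarrow> 6 * (y - 2 + (y + 2) * exp (- y)) < y^3"
proof (rule less_from_0_by_deriv[of "\<lambda>y. 6 * (y - 2 + (y + 2) * exp (- y))" "\<lambda>y. y^3"
      "\<lambda>y. 6 - 6 * (y + 1) * exp (- y)" "\<lambda>y. 3 * y^2"])
  show "6 - 6 * (y + 1) * exp (- y) < 3 * y^2" if "0 < y" for y :: real
    by (rule less_from_0_by_deriv[of "\<lambda>y. 6 - 6 * (y + 1) * exp (- y)" "\<lambda>y. 3 * y^2"
          "\<lambda>y. 6 * y * exp (- y)" "\<lambda>y. 6 * y"])
       (use that in \<open>auto intro!: derivative_eq_intros simp: algebra_simps\<close>)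
qed (auto intro!: derivative_eq_intros simp: algebra_simps power2_eq_square)

lemma two_plus_square_less_exp_plus_exp_minus: "0 < (y::real) \<Longrightarrow> 2 + y^2 < exp y + exp (- y)"
proof -
  have cosh: "2 < exp y + exp (- y)" if "0 < y" for y :: real
    by (rule less_from_0_by_deriv[of "\<lambda>_. 2" "\<lambda>y. exp y + exp (- y)" "\<lambda>_. 0" "\<lambda>y. exp y - exp (- y)"])
       (use that in \<open>auto intro!: derivative_eq_intros\<close>)
  have sinh: "2 * y < exp y - exp (- y)" if "0 < y" for y :: real
    by (rule less_from_0_by_deriv[of "\<lambda>y. 2 * y" "\<lambda>y. exp y - exp (- y)" "\<lambda>_. 2" "\<lambda>y. exp y + exp (- y)"])
       (use that cosh in \<open>auto intro!: derivative_eq_intros\<close>)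
  show "0 < y \<Longrightarrow> ?thesis"
    by (rule less_from_0_by_deriv[of "\<lambda>y. 2 + y^2" "\<lambda>y. exp y + exp (- y)" "\<lambda>y. 2 * y" "\<lambda>y. exp y - exp (- y)"])
       (use sinh in \<open>auto intro!: derivative_eq_intros\<close>)
qed

definition F1' :: "real \<Rightarrow> real" where
  "F1' y = 4 / y^2 * (y^2/2 - 1 + exp (- y) * (y + 1))"

definition F1'' :: "real \<Rightarrow> real" where
  "F1'' y = 4 / y^3 * (2 - exp (- y) * (y^2 + 2*y + 2))"

lemma has_real_derivative_F1: "0 < y \<Longrightarrow> (F1 has_real_derivative F1' y) (at y)"
  unfolding F1_def[abs_def] F1'_def
  by (auto intro!: derivative_eq_intros simp: field_simps power2_eq_square)

lemma has_real_derivative_F1': "0 < y \<Longrightarrow> (F1' has_real_derivative F1'' y) (at y)"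
  unfolding F1'_def[abs_def] F1''_def
  by (auto intro!: derivative_eq_intros simp: field_simps power2_eq_square power3_eq_cube)

lemma F1_chain [derivative_intros]:
  "(g has_real_derivative g') (at x within S) \<Longrightarrow> 0 < g x \<Longrightarrow>
   ((\<lambda>x. F1 (g x)) has_real_derivative F1' (g x) * g') (at x within S)"
  using DERIV_chain2[OF has_real_derivative_F1] by blast

lemma F1'_chain [derivative_intros]:
  "(g has_real_derivative g') (at x within S) \<Longrightarrow> 0 < g x \<Longrightarrow>
   ((\<lambda>x. F1' (g x)) has_real_derivative F1'' (g x) * g') (at x within S)"
  using DERIV_chain2[OF has_real_derivative_F1'] by blast

lemma F1_pos: "0 < y \<Longrightarrow> 0 < F1 y"
  using exp_minus_less_Taylor_2[of y] unfolding F1_def by simp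

lemma F1_tangent_gap: "0 < y \<Longrightarrow> y * F1' y - F1 y = 4 / y * (y - 2 + (y + 2) * exp (- y))"
  unfolding F1'_def F1_def by (simp add: field_simps power2_eq_square)

definition curv_hor :: "real \<Rightarrow> real" where
  "curv_hor f = - F1 f / f^2"

definition curv_vert :: "real \<Rightarrow> real" where
  "curv_vert f = - F1'' f / 2"

definition curv_mix :: "real \<Rightarrow> real" where
  "curv_mix f = (f * F1' f - F1 f) / (4 * f^2)"

lemma curv_hor_bounds: "0 < f \<Longrightarrow> - (2/3) < curv_hor f \<and> curv_hor f < 0"
  using Taylor_3_less_exp_minus[of f] F1_pos[of f] unfolding curv_hor_def F1_def
  by (auto simp: field_simps power2_eq_square power3_eq_cube)

lemma curv_hor_less: "0 < f \<Longrightarrow> curv_hor f < - (2/3) + f/6"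
  using exp_minus_less_Taylor_4[of f] unfolding curv_hor_def F1_def
  by (auto simp: field_simps power2_eq_square power3_eq_cube power4_eq_xxxx)

lemma curv_vert_bounds: "0 < f \<Longrightarrow> - (2/3) < curv_vert f \<and> curv_vert f < 0"
  using exp_minus_mult_quadratic_less[of f] exp_minus_mult_quadratic_gt[of f]
  unfolding curv_vert_def F1''_def by (auto simp: field_simps power3_eq_cube)

lemma curv_mix_bounds: "0 < f \<Longrightarrow> 0 < curv_mix f \<and> curv_mix f < 1/6"
  using exp_minus_mult_linear_gt[of f] exp_minus_mult_linear_less_cubic[of f]
  unfolding curv_mix_def F1_tangent_gap by (auto simp: field_simps power2_eq_square power3_eq_cube)

lemma curv_mix_le: "0 < f \<Longrightarrow> curv_mix f \<le> 2 / f^2"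
proof -
  assume "0 < f"
  then have "(f + 2) * exp (- f) \<le> f + 2"
    by (intro mult_left_le) auto
  then have numerator_le: "f - 2 + (f + 2) * exp (- f) \<le> 2 * f"
    by linarith
  have "curv_mix f = (f - 2 + (f + 2) * exp (- f)) / f^3"
    using \<open>0 < f\<close> unfolding curv_mix_def F1_tangent_gap[OF \<open>0 < f\<close>]
    by (simp add: field_simps power2_eq_square power3_eq_cube)
  also have "\<dots> \<le> (2 * f) / f^3"
    using \<open>0 < f\<close> by (intro divide_right_mono[OF numerator_le]) simp
  also have "\<dots> = 2 / f^2"
    using \<open>0 < f\<close> by (simp add: power2_eq_square power3_eq_cube)
  finally show ?thesis .
qed

lemma curv_mix_sq_less: "0 < f \<Longrightarrow> 4 * (curv_mix f)^2 < curv_hor f * curv_vert f"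
proof -
  assume "0 < f"
  define E where "E = exp (- f)"
  define P where "P = 1 - f + f^2/2 - E"
  define Q where "Q = 2 - E * (f^2 + 2*f + 2)"
  define R where "R = f - 2 + (f + 2) * E"
  have "(2 + f^2) * E < (exp f + E) * E"
    using two_plus_square_less_exp_plus_exp_minus[OF \<open>0 < f\<close>]
    unfolding E_def by (intro mult_strict_right_mono) auto
  also have "(exp f + E) * E = 1 + E^2"
    unfolding E_def by (simp add: distrib_right power2_eq_square exp_minus_inverse)
  finally have "0 < f^2 * (E^2 - (f^2 + 2) * E + 1)"
    using \<open>0 < f\<close> by (intro mult_pos_pos) (auto simp: algebra_simps)
  moreover have "2 * P * Q - R^2 = f^2 * (E^2 - (f^2 + 2) * E + 1)"
    unfolding P_def Q_def R_def by (simp add: algebra_simps power2_eq_square)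
  ultimately have "4 * R^2 < 8 * P * Q"
    by linarith
  moreover have "curv_hor f = - 4 * P / f^3" "curv_vert f = - 2 * Q / f^3" "curv_mix f = R / f^3"
    using \<open>0 < f\<close> unfolding curv_mix_def curv_hor_def curv_vert_def F1_tangent_gap[OF \<open>0 < f\<close>]
    by (simp_all add: R_def P_def Q_def E_def F1_def F1''_def field_simps power2_eq_square power3_eq_cube)
  moreover have "0 < f^3 * f^3"
    using \<open>0 < f\<close> by simp
  ultimately show ?thesis
    by (simp add: power_divide divide_strict_right_mono)
qed

lemma ex_curv_mix_less:
  assumes "0 < e"
  shows "\<exists>t>0. curv_mix t < e"
proof (intro exI conjI)
  define t where "t = 1 + 2 / e"
  have "1 \<le> t" "2 / e < t"
    using assms unfolding t_def by simp_all
  then have "2 / t^2 \<le> 2 / t" "2 / t < e"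
    using assms by (auto simp: field_simps power2_eq_square mult_left_mono)
  with curv_mix_le[of t] \<open>1 \<le> t\<close> show "curv_mix t < e"
    by simp
  show "0 < t"
    using \<open>1 \<le> t\<close> by simp
qed

lemma pd_eq_partials:
  fixes g :: "pt \<Rightarrow> real"
  assumes p: "p \<in> M" and eq: "\<And>q. q \<in> M \<Longrightarrow> g q = H (q$0) (q$3)"
    and dx: "((\<lambda>s. H s (p$3)) has_real_derivative Hx) (at (p$0))"
    and dt: "((\<lambda>s. H (p$0) s) has_real_derivative Ht) (at (p$3))"
  shows "pd g i p = (if i = 0 then Hx else if i = 3 then Ht else 0)"
proof -
  let ?c = "\<lambda>t::real. p + t *\<^sub>R axis i 1"
  have p3: "p$3 > 0" using p by (simp add: M_def)
  have ev: "eventually (\<lambda>t. g (?c t) = H (?c t $ 0) (?c t $ 3)) (nhds 0)"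
    unfolding eventually_nhds_metric
  proof (intro exI[of _ "p$3"] conjI allI impI)
    show "p$3 > 0" by fact
    fix t :: real assume "dist t 0 < p$3"
    hence "?c t $ 3 > 0" by (auto simp: axis_def dist_real_def)
    thus "g (?c t) = H (?c t $ 0) (?c t $ 3)" by (intro eq) (simp add: M_def)
  qed
  have d: "((\<lambda>t. H (?c t $ 0) (?c t $ 3)) has_real_derivative
      (if i = 0 then Hx else if i = 3 then Ht else 0)) (at 0)"
  proof -
    consider "i = 0" | "i = 1" | "i = 2" | "i = 3" using exhaust_4[of i] by auto
    thus ?thesis
    proof cases
      case 1
      have "((\<lambda>t. H (t + p$0) (p$3)) has_real_derivative Hx) (at 0)"
        using dx DERIV_shift[of "\<lambda>s. H s (p$3)" Hx 0 "p$0"] by simp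
      thus ?thesis using 1 by (simp add: axis_def add.commute)
    next
      case 2 thus ?thesis by (simp add: axis_def)
    next
      case 3 thus ?thesis by (simp add: axis_def)
    next
      case 4
      have "((\<lambda>t. H (p$0) (t + p$3)) has_real_derivative Ht) (at 0)"
        using dt DERIV_shift[of "\<lambda>s. H (p$0) s" Ht 0 "p$3"] by simp
      thus ?thesis using 4 by (simp add: axis_def add.commute)
    qed
  qed
  have "((\<lambda>t. g (?c t)) has_real_derivative (if i = 0 then Hx else if i = 3 then Ht else 0)) (at 0)"
    using DERIV_cong_ev[OF refl ev refl] d by simp
  thus ?thesis unfolding pd_def by (rule DERIV_imp_deriv)
qed

definition kdelta :: "4 \<Rightarrow> 4 \<Rightarrow> real" where "kdelta k i = (if i = k then 1 else 0)"

definition metric_coeff :: "4 \<Rightarrow> 4 \<Rightarrow> real \<Rightarrow> real \<Rightarrow> real" where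
  "metric_coeff i j s t = t * (kdelta 0 i * kdelta 0 j + kdelta 1 i * kdelta 1 j)
     + F1 t * ((kdelta 1 i * s - kdelta 2 i) * (kdelta 1 j * s - kdelta 2 j)) + 1 / F1 t * (kdelta 3 i * kdelta 3 j)"

definition metric_coeff_dx :: "4 \<Rightarrow> 4 \<Rightarrow> real \<Rightarrow> real \<Rightarrow> real" where
  "metric_coeff_dx i j s t = F1 t * (kdelta 1 i * (kdelta 1 j * s - kdelta 2 j) + (kdelta 1 i * s - kdelta 2 i) * kdelta 1 j)"

definition metric_coeff_dphi :: "4 \<Rightarrow> 4 \<Rightarrow> real \<Rightarrow> real \<Rightarrow> real" where
  "metric_coeff_dphi i j s t = (kdelta 0 i * kdelta 0 j + kdelta 1 i * kdelta 1 j)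
     + F1' t * ((kdelta 1 i * s - kdelta 2 i) * (kdelta 1 j * s - kdelta 2 j)) - F1' t / (F1 t)^2 * (kdelta 3 i * kdelta 3 j)"

lemma soliton_metric_eq: "soliton_metric q $ i $ j = metric_coeff i j (q$0) (q$3)"
  unfolding soliton_metric_def metric_coeff_def kdelta_def cf_sigma_def cf_rho_def cf_zeta_def cf_dphi_def
  by (auto simp: algebra_simps)

lemma pd_soliton_metric:
  assumes p: "p \<in> M"
  shows "pd (\<lambda>q. soliton_metric q $ j $ l) i p =
     (if i = 0 then metric_coeff_dx j l (p$0) (p$3) else if i = 3 then metric_coeff_dphi j l (p$0) (p$3) else 0)"
proof (rule pd_eq_partials[OF p])
  have p3: "p$3 > 0" using p by (simp add: M_def)
  show "\<And>q. q \<in> M \<Longrightarrow> soliton_metric q $ j $ l = metric_coeff j l (q $ 0) (q $ 3)" by (rule soliton_metric_eq)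
  show "((\<lambda>s. metric_coeff j l s (p $ 3)) has_real_derivative metric_coeff_dx j l (p $ 0) (p $ 3)) (at (p $ 0))"
    unfolding metric_coeff_def metric_coeff_dx_def by (auto intro!: derivative_eq_intros simp: algebra_simps)
  show "((\<lambda>s. metric_coeff j l (p $ 0) s) has_real_derivative metric_coeff_dphi j l (p $ 0) (p $ 3)) (at (p $ 3))"
    unfolding metric_coeff_def metric_coeff_dphi_def using p3 F1_pos[OF p3]
    by (auto intro!: derivative_eq_intros simp: field_simps power2_eq_square)
qed

definition metric_inv_coeff :: "4 \<Rightarrow> 4 \<Rightarrow> real \<Rightarrow> real \<Rightarrow> real" where
  "metric_inv_coeff i j s t = 1/t * (kdelta 0 i * kdelta 0 j + kdelta 1 i * kdelta 1 j) + s/t * (kdelta 1 i * kdelta 2 j + kdelta 2 i * kdelta 1 j)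
     + (1 / F1 t + s^2/t) * (kdelta 2 i * kdelta 2 j) + F1 t * (kdelta 3 i * kdelta 3 j)"

lemma matrix_inv_unique:
  fixes A :: "real^4^4"
  assumes "A ** B = mat 1" "B ** A = mat 1"
  shows "matrix_inv A = B"
proof -
  let ?X = "matrix_inv A"
  have "A ** ?X = mat 1 \<and> ?X ** A = mat 1"
    unfolding matrix_inv_def by (rule someI[of _ B]) (use assms in auto)
  hence "?X = ?X ** (A ** B)" "?X ** A = mat 1" using assms by (auto simp: matrix_mul_rid)
  thus ?thesis by (metis matrix_mul_assoc matrix_mul_lid)
qed

lemma matrix_inv_soliton_metric:
  assumes p: "q \<in> M"
  shows "matrix_inv (soliton_metric q) = (\<chi> i j. metric_inv_coeff i j (q$0) (q$3))"
proof (rule matrix_inv_unique)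
  have q3: "q$3 > 0" using p by (simp add: M_def)
  have F: "F1 (q$3) > 0" using F1_pos[OF q3] .
  show "soliton_metric q ** (\<chi> i j. metric_inv_coeff i j (q $ 0) (q $ 3)) = mat 1"
    unfolding matrix_matrix_mult_def mat_def vec_eq_iff
    using q3 F by (simp add: soliton_metric_eq forall_4 sum_4 metric_coeff_def metric_inv_coeff_def kdelta_def field_simps power2_eq_square)
  show "(\<chi> i j. metric_inv_coeff i j (q $ 0) (q $ 3)) ** soliton_metric q = mat 1"
    unfolding matrix_matrix_mult_def mat_def vec_eq_iff
    using q3 F by (simp add: soliton_metric_eq forall_4 sum_4 metric_coeff_def metric_inv_coeff_def kdelta_def field_simps power2_eq_square)
qed

definition chr_coeff :: "4 \<Rightarrow> 4 \<Rightarrow> 4 \<Rightarrow> real \<Rightarrow> real \<Rightarrow> real" where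
  "chr_coeff a b c s t = (if a = 0 \<and> b = 0 \<and> c = 3 then (1/(2 * t))
    else if a = 0 \<and> b = 1 \<and> c = 1 then (- (s * (F1 t)/(t)))
    else if a = 0 \<and> b = 1 \<and> c = 2 then ((F1 t)/(2 * t))
    else if a = 0 \<and> b = 2 \<and> c = 1 then ((F1 t)/(2 * t))
    else if a = 0 \<and> b = 3 \<and> c = 0 then (1/(2 * t))
    else if a = 1 \<and> b = 0 \<and> c = 1 then (s * (F1 t)/(2 * t))
    else if a = 1 \<and> b = 0 \<and> c = 2 then (- ((F1 t)/(2 * t)))
    else if a = 1 \<and> b = 1 \<and> c = 0 then (s * (F1 t)/(2 * t))
    else if a = 1 \<and> b = 1 \<and> c = 3 then (1/(2 * t))
    else if a = 1 \<and> b = 2 \<and> c = 0 then (- ((F1 t)/(2 * t)))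
    else if a = 1 \<and> b = 3 \<and> c = 1 then (1/(2 * t))
    else if a = 2 \<and> b = 0 \<and> c = 1 then (- (1/(2)) + s^2 * (F1 t)/(2 * t))
    else if a = 2 \<and> b = 0 \<and> c = 2 then (- (s * (F1 t)/(2 * t)))
    else if a = 2 \<and> b = 1 \<and> c = 0 then (- (1/(2)) + s^2 * (F1 t)/(2 * t))
    else if a = 2 \<and> b = 1 \<and> c = 3 then (s/(2 * t) - (s * (F1' t)/(2 * (F1 t))))
    else if a = 2 \<and> b = 2 \<and> c = 0 then (- (s * (F1 t)/(2 * t)))
    else if a = 2 \<and> b = 2 \<and> c = 3 then ((F1' t)/(2 * (F1 t)))
    else if a = 2 \<and> b = 3 \<and> c = 1 then (s/(2 * t) - (s * (F1' t)/(2 * (F1 t))))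
    else if a = 2 \<and> b = 3 \<and> c = 2 then ((F1' t)/(2 * (F1 t)))
    else if a = 3 \<and> b = 0 \<and> c = 0 then (- ((F1 t)/(2)))
    else if a = 3 \<and> b = 1 \<and> c = 1 then (- ((F1 t)/(2)) - (s^2 * (F1 t) * (F1' t)/(2)))
    else if a = 3 \<and> b = 1 \<and> c = 2 then (s * (F1 t) * (F1' t)/(2))
    else if a = 3 \<and> b = 2 \<and> c = 1 then (s * (F1 t) * (F1' t)/(2))
    else if a = 3 \<and> b = 2 \<and> c = 2 then (- ((F1 t) * (F1' t)/(2)))
    else if a = 3 \<and> b = 3 \<and> c = 3 then (- ((F1' t)/(2 * (F1 t)))) else 0)"

definition chr_coeff_dx :: "4 \<Rightarrow> 4 \<Rightarrow> 4 \<Rightarrow> real \<Rightarrow> real \<Rightarrow> real" where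
  "chr_coeff_dx a b c s t = (if a = 0 \<and> b = 1 \<and> c = 1 then (- ((F1 t)/(t)))
    else if a = 1 \<and> b = 0 \<and> c = 1 then ((F1 t)/(2 * t))
    else if a = 1 \<and> b = 1 \<and> c = 0 then ((F1 t)/(2 * t))
    else if a = 2 \<and> b = 0 \<and> c = 1 then (s * (F1 t)/(t))
    else if a = 2 \<and> b = 0 \<and> c = 2 then (- ((F1 t)/(2 * t)))
    else if a = 2 \<and> b = 1 \<and> c = 0 then (s * (F1 t)/(t))
    else if a = 2 \<and> b = 1 \<and> c = 3 then (1/(2 * t) - ((F1' t)/(2 * (F1 t))))
    else if a = 2 \<and> b = 2 \<and> c = 0 then (- ((F1 t)/(2 * t)))
    else if a = 2 \<and> b = 3 \<and> c = 1 then (1/(2 * t) - ((F1' t)/(2 * (F1 t))))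
    else if a = 3 \<and> b = 1 \<and> c = 1 then (- (s * (F1 t) * (F1' t)))
    else if a = 3 \<and> b = 1 \<and> c = 2 then ((F1 t) * (F1' t)/(2))
    else if a = 3 \<and> b = 2 \<and> c = 1 then ((F1 t) * (F1' t)/(2)) else 0)"

definition chr_coeff_dphi :: "4 \<Rightarrow> 4 \<Rightarrow> 4 \<Rightarrow> real \<Rightarrow> real \<Rightarrow> real" where
  "chr_coeff_dphi a b c s t = (if a = 0 \<and> b = 0 \<and> c = 3 then (- (1/(2 * t^2)))
    else if a = 0 \<and> b = 1 \<and> c = 1 then (s * (F1 t)/(t^2) - (s * (F1' t)/(t)))
    else if a = 0 \<and> b = 1 \<and> c = 2 then (- ((F1 t)/(2 * t^2)) + (F1' t)/(2 * t))
    else if a = 0 \<and> b = 2 \<and> c = 1 then (- ((F1 t)/(2 * t^2)) + (F1' t)/(2 * t))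
    else if a = 0 \<and> b = 3 \<and> c = 0 then (- (1/(2 * t^2)))
    else if a = 1 \<and> b = 0 \<and> c = 1 then (- (s * (F1 t)/(2 * t^2)) + s * (F1' t)/(2 * t))
    else if a = 1 \<and> b = 0 \<and> c = 2 then ((F1 t)/(2 * t^2) - ((F1' t)/(2 * t)))
    else if a = 1 \<and> b = 1 \<and> c = 0 then (- (s * (F1 t)/(2 * t^2)) + s * (F1' t)/(2 * t))
    else if a = 1 \<and> b = 1 \<and> c = 3 then (- (1/(2 * t^2)))
    else if a = 1 \<and> b = 2 \<and> c = 0 then ((F1 t)/(2 * t^2) - ((F1' t)/(2 * t)))
    else if a = 1 \<and> b = 3 \<and> c = 1 then (- (1/(2 * t^2)))
    else if a = 2 \<and> b = 0 \<and> c = 1 then (- (s^2 * (F1 t)/(2 * t^2)) + s^2 * (F1' t)/(2 * t))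
    else if a = 2 \<and> b = 0 \<and> c = 2 then (s * (F1 t)/(2 * t^2) - (s * (F1' t)/(2 * t)))
    else if a = 2 \<and> b = 1 \<and> c = 0 then (- (s^2 * (F1 t)/(2 * t^2)) + s^2 * (F1' t)/(2 * t))
    else if a = 2 \<and> b = 1 \<and> c = 3 then (- (s/(2 * t^2)) + s * (F1' t)^2/(2 * (F1 t)^2) - (s * (F1'' t)/(2 * (F1 t))))
    else if a = 2 \<and> b = 2 \<and> c = 0 then (s * (F1 t)/(2 * t^2) - (s * (F1' t)/(2 * t)))
    else if a = 2 \<and> b = 2 \<and> c = 3 then (- ((F1' t)^2/(2 * (F1 t)^2)) + (F1'' t)/(2 * (F1 t)))
    else if a = 2 \<and> b = 3 \<and> c = 1 then (- (s/(2 * t^2)) + s * (F1' t)^2/(2 * (F1 t)^2) - (s * (F1'' t)/(2 * (F1 t))))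
    else if a = 2 \<and> b = 3 \<and> c = 2 then (- ((F1' t)^2/(2 * (F1 t)^2)) + (F1'' t)/(2 * (F1 t)))
    else if a = 3 \<and> b = 0 \<and> c = 0 then (- ((F1' t)/(2)))
    else if a = 3 \<and> b = 1 \<and> c = 1 then (- ((F1' t)/(2)) - (s^2 * (F1' t)^2/(2)) - (s^2 * (F1 t) * (F1'' t)/(2)))
    else if a = 3 \<and> b = 1 \<and> c = 2 then (s * (F1' t)^2/(2) + s * (F1 t) * (F1'' t)/(2))
    else if a = 3 \<and> b = 2 \<and> c = 1 then (s * (F1' t)^2/(2) + s * (F1 t) * (F1'' t)/(2))
    else if a = 3 \<and> b = 2 \<and> c = 2 then (- ((F1' t)^2/(2)) - ((F1 t) * (F1'' t)/(2)))
    else if a = 3 \<and> b = 3 \<and> c = 3 then ((F1' t)^2/(2 * (F1 t)^2) - ((F1'' t)/(2 * (F1 t)))) else 0)"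

lemma christoffel_soliton_metric:
  assumes q: "q \<in> M"
  shows "christoffel soliton_metric q k i j = chr_coeff k i j (q$0) (q$3)"
proof -
  have q3: "q$3 > 0" using q by (simp add: M_def)
  have F: "F1 (q$3) > 0" using F1_pos[OF q3] .
  show ?thesis
    unfolding christoffel_def matrix_inv_soliton_metric[OF q] pd_soliton_metric[OF q]
    using exhaust_4[of k] exhaust_4[of i] exhaust_4[of j] q3 F
    by (elim disjE) (simp_all add: sum_4 chr_coeff_def metric_inv_coeff_def metric_coeff_dx_def metric_coeff_dphi_def kdelta_def field_simps power2_eq_square)
qed

lemma has_real_derivative_chr_coeff_dx:
  assumes t: "t > 0"
  shows "((\<lambda>s. chr_coeff l j k s t) has_real_derivative chr_coeff_dx l j k s t) (at s)"
  using exhaust_4[of l] exhaust_4[of j] exhaust_4[of k] t F1_pos[OF t]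
  by (elim disjE) (auto simp: chr_coeff_def chr_coeff_dx_def intro!: derivative_eq_intros simp: field_simps power2_eq_square)

lemma has_real_derivative_chr_coeff_dphi:
  assumes t: "t > 0"
  shows "((\<lambda>t. chr_coeff l j k s t) has_real_derivative chr_coeff_dphi l j k s t) (at t)"
  using exhaust_4[of l] exhaust_4[of j] exhaust_4[of k] t F1_pos[OF t]
  by (elim disjE) (auto simp: chr_coeff_def chr_coeff_dphi_def intro!: derivative_eq_intros simp: field_simps power2_eq_square)

lemma pd_christoffel_soliton_metric:
  assumes p: "p \<in> M"
  shows "pd (\<lambda>q. christoffel soliton_metric q l j k) i p =
     (if i = 0 then chr_coeff_dx l j k (p$0) (p$3) else if i = 3 then chr_coeff_dphi l j k (p$0) (p$3) else 0)"
proof (rule pd_eq_partials[OF p])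
  have p3: "p$3 > 0" using p by (simp add: M_def)
  show "\<And>q. q \<in> M \<Longrightarrow> christoffel soliton_metric q l j k = chr_coeff l j k (q $ 0) (q $ 3)" by (rule christoffel_soliton_metric)
  show "((\<lambda>s. chr_coeff l j k s (p $ 3)) has_real_derivative chr_coeff_dx l j k (p $ 0) (p $ 3)) (at (p $ 0))"
    by (rule has_real_derivative_chr_coeff_dx[OF p3])
  show "((\<lambda>s. chr_coeff l j k (p $ 0) s) has_real_derivative chr_coeff_dphi l j k (p $ 0) (p $ 3)) (at (p $ 3))"
    by (rule has_real_derivative_chr_coeff_dphi[OF p3])
qed

definition riem_coeff :: "4 \<Rightarrow> 4 \<Rightarrow> 4 \<Rightarrow> 4 \<Rightarrow> real \<Rightarrow> real \<Rightarrow> real" where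
  "riem_coeff a b c d s t = (if a = 0 \<and> b = 1 \<and> c = 0 \<and> d = 1 then ((F1 t)/(t))
    else if a = 0 \<and> b = 1 \<and> c = 0 \<and> d = 2 then (5 * s * (F1 t)/(4 * t) - (s * (F1' t)/(4)))
    else if a = 0 \<and> b = 1 \<and> c = 1 \<and> d = 0 then (- ((F1 t)/(t)) + s^2 * (F1 t)^2/(4 * t^2) - (s^2 * (F1 t) * (F1' t)/(4 * t)))
    else if a = 0 \<and> b = 1 \<and> c = 1 \<and> d = 3 then (3 * s * (F1 t)^2/(4 * t) - (3 * s * (F1 t) * (F1' t)/(4)))
    else if a = 0 \<and> b = 1 \<and> c = 2 \<and> d = 0 then (- (s * (F1 t)^2/(4 * t^2)) + s * (F1 t) * (F1' t)/(4 * t))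
    else if a = 0 \<and> b = 1 \<and> c = 2 \<and> d = 3 then (- ((F1 t)^2/(2 * t)) + (F1 t) * (F1' t)/(2))
    else if a = 0 \<and> b = 1 \<and> c = 3 \<and> d = 1 then (- (s * (F1 t)/(4 * t^2)) + s * (F1' t)/(4 * t))
    else if a = 0 \<and> b = 1 \<and> c = 3 \<and> d = 2 then (1/(2 * t) - ((F1' t)/(2 * (F1 t))) - (s^2 * (F1 t)/(4 * t^2)) + s^2 * (F1' t)/(4 * t))
    else if a = 0 \<and> b = 2 \<and> c = 0 \<and> d = 2 then (- ((F1 t)/(4 * t)) + (F1' t)/(4))
    else if a = 0 \<and> b = 2 \<and> c = 1 \<and> d = 0 then (- (s * (F1 t)^2/(4 * t^2)) + s * (F1 t) * (F1' t)/(4 * t))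
    else if a = 0 \<and> b = 2 \<and> c = 1 \<and> d = 3 then (- ((F1 t)^2/(4 * t)) + (F1 t) * (F1' t)/(4))
    else if a = 0 \<and> b = 2 \<and> c = 2 \<and> d = 0 then ((F1 t)^2/(4 * t^2) - ((F1 t) * (F1' t)/(4 * t)))
    else if a = 0 \<and> b = 2 \<and> c = 3 \<and> d = 1 then ((F1 t)/(4 * t^2) - ((F1' t)/(4 * t)))
    else if a = 0 \<and> b = 2 \<and> c = 3 \<and> d = 2 then (s * (F1 t)/(4 * t^2) - (s * (F1' t)/(4 * t)))
    else if a = 0 \<and> b = 3 \<and> c = 0 \<and> d = 3 then (- ((F1 t)/(4 * t)) + (F1' t)/(4))
    else if a = 0 \<and> b = 3 \<and> c = 1 \<and> d = 1 then (s * (F1 t)/(4 * t^2) - (s * (F1' t)/(4 * t)))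
    else if a = 0 \<and> b = 3 \<and> c = 1 \<and> d = 2 then (1/(4 * t) - ((F1' t)/(4 * (F1 t))) + s^2 * (F1 t)/(4 * t^2) - (s^2 * (F1' t)/(4 * t)))
    else if a = 0 \<and> b = 3 \<and> c = 2 \<and> d = 1 then (- ((F1 t)/(4 * t^2)) + (F1' t)/(4 * t))
    else if a = 0 \<and> b = 3 \<and> c = 2 \<and> d = 2 then (- (s * (F1 t)/(4 * t^2)) + s * (F1' t)/(4 * t))
    else if a = 0 \<and> b = 3 \<and> c = 3 \<and> d = 0 then (1/(4 * t^2) - ((F1' t)/(4 * t * (F1 t))))
    else if a = 1 \<and> b = 0 \<and> c = 0 \<and> d = 1 then (- ((F1 t)/(t)))
    else if a = 1 \<and> b = 0 \<and> c = 0 \<and> d = 2 then (- (5 * s * (F1 t)/(4 * t)) + s * (F1' t)/(4))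
    else if a = 1 \<and> b = 0 \<and> c = 1 \<and> d = 0 then ((F1 t)/(t) - (s^2 * (F1 t)^2/(4 * t^2)) + s^2 * (F1 t) * (F1' t)/(4 * t))
    else if a = 1 \<and> b = 0 \<and> c = 1 \<and> d = 3 then (- (3 * s * (F1 t)^2/(4 * t)) + 3 * s * (F1 t) * (F1' t)/(4))
    else if a = 1 \<and> b = 0 \<and> c = 2 \<and> d = 0 then (s * (F1 t)^2/(4 * t^2) - (s * (F1 t) * (F1' t)/(4 * t)))
    else if a = 1 \<and> b = 0 \<and> c = 2 \<and> d = 3 then ((F1 t)^2/(2 * t) - ((F1 t) * (F1' t)/(2)))
    else if a = 1 \<and> b = 0 \<and> c = 3 \<and> d = 1 then (s * (F1 t)/(4 * t^2) - (s * (F1' t)/(4 * t)))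
    else if a = 1 \<and> b = 0 \<and> c = 3 \<and> d = 2 then (- (1/(2 * t)) + (F1' t)/(2 * (F1 t)) + s^2 * (F1 t)/(4 * t^2) - (s^2 * (F1' t)/(4 * t)))
    else if a = 1 \<and> b = 2 \<and> c = 0 \<and> d = 3 then ((F1 t)^2/(4 * t) - ((F1 t) * (F1' t)/(4)))
    else if a = 1 \<and> b = 2 \<and> c = 1 \<and> d = 1 then (- (s * (F1 t)^2/(4 * t^2)) + s * (F1 t) * (F1' t)/(4 * t))
    else if a = 1 \<and> b = 2 \<and> c = 1 \<and> d = 2 then (- ((F1 t)/(4 * t)) + (F1' t)/(4) - (s^2 * (F1 t)^2/(4 * t^2)) + s^2 * (F1 t) * (F1' t)/(4 * t))
    else if a = 1 \<and> b = 2 \<and> c = 2 \<and> d = 1 then ((F1 t)^2/(4 * t^2) - ((F1 t) * (F1' t)/(4 * t)))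
    else if a = 1 \<and> b = 2 \<and> c = 2 \<and> d = 2 then (s * (F1 t)^2/(4 * t^2) - (s * (F1 t) * (F1' t)/(4 * t)))
    else if a = 1 \<and> b = 2 \<and> c = 3 \<and> d = 0 then (- ((F1 t)/(4 * t^2)) + (F1' t)/(4 * t))
    else if a = 1 \<and> b = 3 \<and> c = 0 \<and> d = 1 then (s * (F1 t)/(2 * t^2) - (s * (F1' t)/(2 * t)))
    else if a = 1 \<and> b = 3 \<and> c = 0 \<and> d = 2 then (- (1/(4 * t)) + (F1' t)/(4 * (F1 t)) + s^2 * (F1 t)/(2 * t^2) - (s^2 * (F1' t)/(2 * t)))
    else if a = 1 \<and> b = 3 \<and> c = 1 \<and> d = 0 then (- (3 * s * (F1 t)/(4 * t^2)) + 3 * s * (F1' t)/(4 * t))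
    else if a = 1 \<and> b = 3 \<and> c = 1 \<and> d = 3 then (- ((F1 t)/(4 * t)) + (F1' t)/(4) + s^2 * (F1 t) * (F1'' t)/(2))
    else if a = 1 \<and> b = 3 \<and> c = 2 \<and> d = 0 then ((F1 t)/(4 * t^2) - ((F1' t)/(4 * t)))
    else if a = 1 \<and> b = 3 \<and> c = 2 \<and> d = 3 then (- (s * (F1 t) * (F1'' t)/(2)))
    else if a = 1 \<and> b = 3 \<and> c = 3 \<and> d = 1 then (1/(4 * t^2) - ((F1' t)/(4 * t * (F1 t))))
    else if a = 1 \<and> b = 3 \<and> c = 3 \<and> d = 2 then (s/(4 * t^2) - (s * (F1' t)/(4 * t * (F1 t))) + s * (F1'' t)/(2 * (F1 t)))
    else if a = 2 \<and> b = 0 \<and> c = 0 \<and> d = 2 then ((F1 t)/(4 * t) - ((F1' t)/(4)))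
    else if a = 2 \<and> b = 0 \<and> c = 1 \<and> d = 0 then (s * (F1 t)^2/(4 * t^2) - (s * (F1 t) * (F1' t)/(4 * t)))
    else if a = 2 \<and> b = 0 \<and> c = 1 \<and> d = 3 then ((F1 t)^2/(4 * t) - ((F1 t) * (F1' t)/(4)))
    else if a = 2 \<and> b = 0 \<and> c = 2 \<and> d = 0 then (- ((F1 t)^2/(4 * t^2)) + (F1 t) * (F1' t)/(4 * t))
    else if a = 2 \<and> b = 0 \<and> c = 3 \<and> d = 1 then (- ((F1 t)/(4 * t^2)) + (F1' t)/(4 * t))
    else if a = 2 \<and> b = 0 \<and> c = 3 \<and> d = 2 then (- (s * (F1 t)/(4 * t^2)) + s * (F1' t)/(4 * t))
    else if a = 2 \<and> b = 1 \<and> c = 0 \<and> d = 3 then (- ((F1 t)^2/(4 * t)) + (F1 t) * (F1' t)/(4))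
    else if a = 2 \<and> b = 1 \<and> c = 1 \<and> d = 1 then (s * (F1 t)^2/(4 * t^2) - (s * (F1 t) * (F1' t)/(4 * t)))
    else if a = 2 \<and> b = 1 \<and> c = 1 \<and> d = 2 then ((F1 t)/(4 * t) - ((F1' t)/(4)) + s^2 * (F1 t)^2/(4 * t^2) - (s^2 * (F1 t) * (F1' t)/(4 * t)))
    else if a = 2 \<and> b = 1 \<and> c = 2 \<and> d = 1 then (- ((F1 t)^2/(4 * t^2)) + (F1 t) * (F1' t)/(4 * t))
    else if a = 2 \<and> b = 1 \<and> c = 2 \<and> d = 2 then (- (s * (F1 t)^2/(4 * t^2)) + s * (F1 t) * (F1' t)/(4 * t))
    else if a = 2 \<and> b = 1 \<and> c = 3 \<and> d = 0 then ((F1 t)/(4 * t^2) - ((F1' t)/(4 * t)))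
    else if a = 2 \<and> b = 3 \<and> c = 0 \<and> d = 1 then (- ((F1 t)/(2 * t^2)) + (F1' t)/(2 * t))
    else if a = 2 \<and> b = 3 \<and> c = 0 \<and> d = 2 then (- (s * (F1 t)/(2 * t^2)) + s * (F1' t)/(2 * t))
    else if a = 2 \<and> b = 3 \<and> c = 1 \<and> d = 0 then ((F1 t)/(2 * t^2) - ((F1' t)/(2 * t)))
    else if a = 2 \<and> b = 3 \<and> c = 1 \<and> d = 3 then (- (s * (F1 t) * (F1'' t)/(2)))
    else if a = 2 \<and> b = 3 \<and> c = 2 \<and> d = 3 then ((F1 t) * (F1'' t)/(2))
    else if a = 2 \<and> b = 3 \<and> c = 3 \<and> d = 2 then (- ((F1'' t)/(2 * (F1 t))))
    else if a = 3 \<and> b = 0 \<and> c = 0 \<and> d = 3 then ((F1 t)/(4 * t) - ((F1' t)/(4)))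
    else if a = 3 \<and> b = 0 \<and> c = 1 \<and> d = 1 then (- (s * (F1 t)/(4 * t^2)) + s * (F1' t)/(4 * t))
    else if a = 3 \<and> b = 0 \<and> c = 1 \<and> d = 2 then (- (1/(4 * t)) + (F1' t)/(4 * (F1 t)) - (s^2 * (F1 t)/(4 * t^2)) + s^2 * (F1' t)/(4 * t))
    else if a = 3 \<and> b = 0 \<and> c = 2 \<and> d = 1 then ((F1 t)/(4 * t^2) - ((F1' t)/(4 * t)))
    else if a = 3 \<and> b = 0 \<and> c = 2 \<and> d = 2 then (s * (F1 t)/(4 * t^2) - (s * (F1' t)/(4 * t)))
    else if a = 3 \<and> b = 0 \<and> c = 3 \<and> d = 0 then (- (1/(4 * t^2)) + (F1' t)/(4 * t * (F1 t)))
    else if a = 3 \<and> b = 1 \<and> c = 0 \<and> d = 1 then (- (s * (F1 t)/(2 * t^2)) + s * (F1' t)/(2 * t))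
    else if a = 3 \<and> b = 1 \<and> c = 0 \<and> d = 2 then (1/(4 * t) - ((F1' t)/(4 * (F1 t))) - (s^2 * (F1 t)/(2 * t^2)) + s^2 * (F1' t)/(2 * t))
    else if a = 3 \<and> b = 1 \<and> c = 1 \<and> d = 0 then (3 * s * (F1 t)/(4 * t^2) - (3 * s * (F1' t)/(4 * t)))
    else if a = 3 \<and> b = 1 \<and> c = 1 \<and> d = 3 then ((F1 t)/(4 * t) - ((F1' t)/(4)) - (s^2 * (F1 t) * (F1'' t)/(2)))
    else if a = 3 \<and> b = 1 \<and> c = 2 \<and> d = 0 then (- ((F1 t)/(4 * t^2)) + (F1' t)/(4 * t))
    else if a = 3 \<and> b = 1 \<and> c = 2 \<and> d = 3 then (s * (F1 t) * (F1'' t)/(2))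
    else if a = 3 \<and> b = 1 \<and> c = 3 \<and> d = 1 then (- (1/(4 * t^2)) + (F1' t)/(4 * t * (F1 t)))
    else if a = 3 \<and> b = 1 \<and> c = 3 \<and> d = 2 then (- (s/(4 * t^2)) + s * (F1' t)/(4 * t * (F1 t)) - (s * (F1'' t)/(2 * (F1 t))))
    else if a = 3 \<and> b = 2 \<and> c = 0 \<and> d = 1 then ((F1 t)/(2 * t^2) - ((F1' t)/(2 * t)))
    else if a = 3 \<and> b = 2 \<and> c = 0 \<and> d = 2 then (s * (F1 t)/(2 * t^2) - (s * (F1' t)/(2 * t)))
    else if a = 3 \<and> b = 2 \<and> c = 1 \<and> d = 0 then (- ((F1 t)/(2 * t^2)) + (F1' t)/(2 * t))
    else if a = 3 \<and> b = 2 \<and> c = 1 \<and> d = 3 then (s * (F1 t) * (F1'' t)/(2))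
    else if a = 3 \<and> b = 2 \<and> c = 2 \<and> d = 3 then (- ((F1 t) * (F1'' t)/(2)))
    else if a = 3 \<and> b = 2 \<and> c = 3 \<and> d = 2 then ((F1'' t)/(2 * (F1 t))) else 0)"

lemma riem_soliton_metric:
  assumes p: "p \<in> M"
  shows "riem soliton_metric p i j k l = riem_coeff i j k l (p$0) (p$3)"
proof -
  have p3: "p$3 > 0" using p by (simp add: M_def)
  have F: "F1 (p$3) > 0" using F1_pos[OF p3] .
  show ?thesis
    unfolding riem_def pd_christoffel_soliton_metric[OF p] christoffel_soliton_metric[OF p]
    using exhaust_4[of i] exhaust_4[of j] exhaust_4[of k] exhaust_4[of l] p3 F
    by (elim disjE) (simp_all add: sum_4 chr_coeff_def chr_coeff_dx_def chr_coeff_dphi_def riem_coeff_def field_simps power2_eq_square)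
qed

(* riem_lowered_poly is the curvature tensor with its last index lowered by g, with F1, F1', F1'',
   1/phi and 1/F1 abstracted to the variables FF, Fd, Fdd, it, iF: this makes the identity
   sec_numerator_poly_eq polynomial, so that algebra can decide it. *)
definition riem_lowered_poly :: "4 \<Rightarrow> 4 \<Rightarrow> 4 \<Rightarrow> 4 \<Rightarrow> real \<Rightarrow> real \<Rightarrow> real \<Rightarrow> real \<Rightarrow> real \<Rightarrow> real \<Rightarrow> real \<Rightarrow> real" where
  "riem_lowered_poly a b c d s t FF Fd Fdd it iF = (if a = 0 \<and> b = 1 \<and> c = 0 \<and> d = 1 then (FF - (s^2 * FF^2 * it / 4) + s^2 * FF * Fd / 4)
    else if a = 0 \<and> b = 1 \<and> c = 0 \<and> d = 2 then (s * FF^2 * it / 4 - (s * FF * Fd / 4))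
    else if a = 0 \<and> b = 1 \<and> c = 1 \<and> d = 0 then (- (FF) + s^2 * FF^2 * it / 4 - (s^2 * FF * Fd / 4))
    else if a = 0 \<and> b = 1 \<and> c = 1 \<and> d = 3 then (3 * s * FF * it / 4 - (3 * s * Fd / 4))
    else if a = 0 \<and> b = 1 \<and> c = 2 \<and> d = 0 then (- (s * FF^2 * it / 4) + s * FF * Fd / 4)
    else if a = 0 \<and> b = 1 \<and> c = 2 \<and> d = 3 then (- (FF * it / 2) + Fd / 2)
    else if a = 0 \<and> b = 1 \<and> c = 3 \<and> d = 1 then (- (3 * s * FF * it / 4) + 3 * s * Fd / 4)
    else if a = 0 \<and> b = 1 \<and> c = 3 \<and> d = 2 then (FF * it / 2 - (Fd / 2))
    else if a = 0 \<and> b = 2 \<and> c = 0 \<and> d = 1 then (s * FF^2 * it / 4 - (s * FF * Fd / 4))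
    else if a = 0 \<and> b = 2 \<and> c = 0 \<and> d = 2 then (- (FF^2 * it / 4) + FF * Fd / 4)
    else if a = 0 \<and> b = 2 \<and> c = 1 \<and> d = 0 then (- (s * FF^2 * it / 4) + s * FF * Fd / 4)
    else if a = 0 \<and> b = 2 \<and> c = 1 \<and> d = 3 then (- (FF * it / 4) + Fd / 4)
    else if a = 0 \<and> b = 2 \<and> c = 2 \<and> d = 0 then (FF^2 * it / 4 - (FF * Fd / 4))
    else if a = 0 \<and> b = 2 \<and> c = 3 \<and> d = 1 then (FF * it / 4 - (Fd / 4))
    else if a = 0 \<and> b = 3 \<and> c = 0 \<and> d = 3 then (- (it / 4) + Fd * iF / 4)
    else if a = 0 \<and> b = 3 \<and> c = 1 \<and> d = 2 then (FF * it / 4 - (Fd / 4))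
    else if a = 0 \<and> b = 3 \<and> c = 2 \<and> d = 1 then (- (FF * it / 4) + Fd / 4)
    else if a = 0 \<and> b = 3 \<and> c = 3 \<and> d = 0 then (it / 4 - (Fd * iF / 4))
    else if a = 1 \<and> b = 0 \<and> c = 0 \<and> d = 1 then (- (FF) + s^2 * FF^2 * it / 4 - (s^2 * FF * Fd / 4))
    else if a = 1 \<and> b = 0 \<and> c = 0 \<and> d = 2 then (- (s * FF^2 * it / 4) + s * FF * Fd / 4)
    else if a = 1 \<and> b = 0 \<and> c = 1 \<and> d = 0 then (FF - (s^2 * FF^2 * it / 4) + s^2 * FF * Fd / 4)
    else if a = 1 \<and> b = 0 \<and> c = 1 \<and> d = 3 then (- (3 * s * FF * it / 4) + 3 * s * Fd / 4)
    else if a = 1 \<and> b = 0 \<and> c = 2 \<and> d = 0 then (s * FF^2 * it / 4 - (s * FF * Fd / 4))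
    else if a = 1 \<and> b = 0 \<and> c = 2 \<and> d = 3 then (FF * it / 2 - (Fd / 2))
    else if a = 1 \<and> b = 0 \<and> c = 3 \<and> d = 1 then (3 * s * FF * it / 4 - (3 * s * Fd / 4))
    else if a = 1 \<and> b = 0 \<and> c = 3 \<and> d = 2 then (- (FF * it / 2) + Fd / 2)
    else if a = 1 \<and> b = 2 \<and> c = 0 \<and> d = 3 then (FF * it / 4 - (Fd / 4))
    else if a = 1 \<and> b = 2 \<and> c = 1 \<and> d = 2 then (- (FF^2 * it / 4) + FF * Fd / 4)
    else if a = 1 \<and> b = 2 \<and> c = 2 \<and> d = 1 then (FF^2 * it / 4 - (FF * Fd / 4))
    else if a = 1 \<and> b = 2 \<and> c = 3 \<and> d = 0 then (- (FF * it / 4) + Fd / 4)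
    else if a = 1 \<and> b = 3 \<and> c = 0 \<and> d = 1 then (3 * s * FF * it / 4 - (3 * s * Fd / 4))
    else if a = 1 \<and> b = 3 \<and> c = 0 \<and> d = 2 then (- (FF * it / 4) + Fd / 4)
    else if a = 1 \<and> b = 3 \<and> c = 1 \<and> d = 0 then (- (3 * s * FF * it / 4) + 3 * s * Fd / 4)
    else if a = 1 \<and> b = 3 \<and> c = 1 \<and> d = 3 then (- (it / 4) + Fd * iF / 4 + s^2 * Fdd / 2)
    else if a = 1 \<and> b = 3 \<and> c = 2 \<and> d = 0 then (FF * it / 4 - (Fd / 4))
    else if a = 1 \<and> b = 3 \<and> c = 2 \<and> d = 3 then (- (s * Fdd / 2))
    else if a = 1 \<and> b = 3 \<and> c = 3 \<and> d = 1 then (it / 4 - (Fd * iF / 4) - (s^2 * Fdd / 2))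
    else if a = 1 \<and> b = 3 \<and> c = 3 \<and> d = 2 then (s * Fdd / 2)
    else if a = 2 \<and> b = 0 \<and> c = 0 \<and> d = 1 then (- (s * FF^2 * it / 4) + s * FF * Fd / 4)
    else if a = 2 \<and> b = 0 \<and> c = 0 \<and> d = 2 then (FF^2 * it / 4 - (FF * Fd / 4))
    else if a = 2 \<and> b = 0 \<and> c = 1 \<and> d = 0 then (s * FF^2 * it / 4 - (s * FF * Fd / 4))
    else if a = 2 \<and> b = 0 \<and> c = 1 \<and> d = 3 then (FF * it / 4 - (Fd / 4))
    else if a = 2 \<and> b = 0 \<and> c = 2 \<and> d = 0 then (- (FF^2 * it / 4) + FF * Fd / 4)
    else if a = 2 \<and> b = 0 \<and> c = 3 \<and> d = 1 then (- (FF * it / 4) + Fd / 4)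
    else if a = 2 \<and> b = 1 \<and> c = 0 \<and> d = 3 then (- (FF * it / 4) + Fd / 4)
    else if a = 2 \<and> b = 1 \<and> c = 1 \<and> d = 2 then (FF^2 * it / 4 - (FF * Fd / 4))
    else if a = 2 \<and> b = 1 \<and> c = 2 \<and> d = 1 then (- (FF^2 * it / 4) + FF * Fd / 4)
    else if a = 2 \<and> b = 1 \<and> c = 3 \<and> d = 0 then (FF * it / 4 - (Fd / 4))
    else if a = 2 \<and> b = 3 \<and> c = 0 \<and> d = 1 then (- (FF * it / 2) + Fd / 2)
    else if a = 2 \<and> b = 3 \<and> c = 1 \<and> d = 0 then (FF * it / 2 - (Fd / 2))
    else if a = 2 \<and> b = 3 \<and> c = 1 \<and> d = 3 then (- (s * Fdd / 2))
    else if a = 2 \<and> b = 3 \<and> c = 2 \<and> d = 3 then (Fdd / 2)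
    else if a = 2 \<and> b = 3 \<and> c = 3 \<and> d = 1 then (s * Fdd / 2)
    else if a = 2 \<and> b = 3 \<and> c = 3 \<and> d = 2 then (- (Fdd / 2))
    else if a = 3 \<and> b = 0 \<and> c = 0 \<and> d = 3 then (it / 4 - (Fd * iF / 4))
    else if a = 3 \<and> b = 0 \<and> c = 1 \<and> d = 2 then (- (FF * it / 4) + Fd / 4)
    else if a = 3 \<and> b = 0 \<and> c = 2 \<and> d = 1 then (FF * it / 4 - (Fd / 4))
    else if a = 3 \<and> b = 0 \<and> c = 3 \<and> d = 0 then (- (it / 4) + Fd * iF / 4)
    else if a = 3 \<and> b = 1 \<and> c = 0 \<and> d = 1 then (- (3 * s * FF * it / 4) + 3 * s * Fd / 4)
    else if a = 3 \<and> b = 1 \<and> c = 0 \<and> d = 2 then (FF * it / 4 - (Fd / 4))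
    else if a = 3 \<and> b = 1 \<and> c = 1 \<and> d = 0 then (3 * s * FF * it / 4 - (3 * s * Fd / 4))
    else if a = 3 \<and> b = 1 \<and> c = 1 \<and> d = 3 then (it / 4 - (Fd * iF / 4) - (s^2 * Fdd / 2))
    else if a = 3 \<and> b = 1 \<and> c = 2 \<and> d = 0 then (- (FF * it / 4) + Fd / 4)
    else if a = 3 \<and> b = 1 \<and> c = 2 \<and> d = 3 then (s * Fdd / 2)
    else if a = 3 \<and> b = 1 \<and> c = 3 \<and> d = 1 then (- (it / 4) + Fd * iF / 4 + s^2 * Fdd / 2)
    else if a = 3 \<and> b = 1 \<and> c = 3 \<and> d = 2 then (- (s * Fdd / 2))
    else if a = 3 \<and> b = 2 \<and> c = 0 \<and> d = 1 then (FF * it / 2 - (Fd / 2))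
    else if a = 3 \<and> b = 2 \<and> c = 1 \<and> d = 0 then (- (FF * it / 2) + Fd / 2)
    else if a = 3 \<and> b = 2 \<and> c = 1 \<and> d = 3 then (s * Fdd / 2)
    else if a = 3 \<and> b = 2 \<and> c = 2 \<and> d = 3 then (- (Fdd / 2))
    else if a = 3 \<and> b = 2 \<and> c = 3 \<and> d = 1 then (- (s * Fdd / 2))
    else if a = 3 \<and> b = 2 \<and> c = 3 \<and> d = 2 then (Fdd / 2) else 0)"

lemma riem_lowered_eq:
  assumes t: "t > 0"
  shows "(\<Sum>l\<in>UNIV. riem_coeff i j k l s t * metric_coeff l m s t) = riem_lowered_poly i j k m s t (F1 t) (F1' t) (F1'' t) (1 / t) (1 / F1 t)"
  using exhaust_4[of i] exhaust_4[of j] exhaust_4[of k] exhaust_4[of m] t F1_pos[OF t]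
  by (elim disjE) (simp_all add: sum_4 riem_coeff_def metric_coeff_def kdelta_def riem_lowered_poly_def field_simps power2_eq_square)

definition sec_numerator_poly :: "real \<Rightarrow> real \<Rightarrow> real \<Rightarrow> real \<Rightarrow> real \<Rightarrow> real^4 \<Rightarrow> real^4 \<Rightarrow> real" where
  "sec_numerator_poly x f F F' F'' u v =
    - 4 * F^2 * (f * (u$0 * v$1 - u$1 * v$0))^2
    - 2 * f^2 * F * F'' * ((x * u$1 - u$2) * v$3 - u$3 * (x * v$1 - v$2))^2
    + 4 * F * (F' * f - F) * (f * (u$0 * v$1 - u$1 * v$0)) * ((x * u$1 - u$2) * v$3 - u$3 * (x * v$1 - v$2))
    - (F' * f - F) * (f * F^2 * (u$0 * (x * v$1 - v$2) - (x * u$1 - u$2) * v$0)^2 + f * (u$0 * v$3 - u$3 * v$0)^2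
        + f * F^2 * (u$1 * (x * v$1 - v$2) - (x * u$1 - u$2) * v$1)^2 + f * (u$1 * v$3 - u$3 * v$1)^2)
    + 2 * F * (F' * f - F) * f * ((u$0 * (x * v$1 - v$2) - (x * u$1 - u$2) * v$0) * (u$1 * v$3 - u$3 * v$1)
        - (u$0 * v$3 - u$3 * v$0) * (u$1 * (x * v$1 - v$2) - (x * u$1 - u$2) * v$1))"

lemma four_eq_zero: "(4::4) = 0" by simp

lemma sec_numerator_poly_eq:
  assumes "t * it = 1" "FF * iF = 1"
  shows "4 * t^2 * FF * (\<Sum>i\<in>UNIV. \<Sum>j\<in>UNIV. \<Sum>k\<in>UNIV. \<Sum>m\<in>UNIV. u$i * v$j * v$k * u$m * riem_lowered_poly i j k m x t FF Fd Fdd it iF)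
     = sec_numerator_poly x t FF Fd Fdd u v"
  unfolding sec_numerator_poly_def
  by (simp add: sum_4 riem_lowered_poly_def four_eq_zero) (use assms in algebra)

lemma sum_riem_metric_reorder:
  fixes u v :: "real^4" and R :: "4 \<Rightarrow> 4 \<Rightarrow> 4 \<Rightarrow> 4 \<Rightarrow> real" and G :: "4 \<Rightarrow> 4 \<Rightarrow> real"
  shows "(\<Sum>i\<in>UNIV. \<Sum>j\<in>UNIV. \<Sum>k\<in>UNIV. \<Sum>l\<in>UNIV. \<Sum>m\<in>UNIV. u$i * v$j * v$k * R i j k l * G l m * u$m)
     = (\<Sum>i\<in>UNIV. \<Sum>j\<in>UNIV. \<Sum>k\<in>UNIV. \<Sum>m\<in>UNIV. u$i * v$j * v$k * u$m * (\<Sum>l\<in>UNIV. R i j k l * G l m))"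
proof -
  have "\<And>i j k. (\<Sum>l\<in>UNIV. \<Sum>m\<in>UNIV. u$i * v$j * v$k * R i j k l * G l m * u$m)
     = (\<Sum>m\<in>UNIV. u$i * v$j * v$k * u$m * (\<Sum>l\<in>UNIV. R i j k l * G l m))"
    by (subst sum.swap) (simp add: sum_distrib_left mult_ac)
  thus ?thesis by simp
qed

definition gram_det_poly :: "real \<Rightarrow> real \<Rightarrow> real^4 \<Rightarrow> real^4 \<Rightarrow> real" where
  "gram_det_poly x f u v = (f * (u$0 * v$1 - u$1 * v$0))^2 + ((x * u$1 - u$2) * v$3 - u$3 * (x * v$1 - v$2))^2
     + f * F1 f * (u$0 * (x * v$1 - v$2) - (x * u$1 - u$2) * v$0)^2 + f / F1 f * (u$0 * v$3 - u$3 * v$0)^2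
     + f * F1 f * (u$1 * (x * v$1 - v$2) - (x * u$1 - u$2) * v$1)^2 + f / F1 f * (u$1 * v$3 - u$3 * v$1)^2"

lemma gram_det_soliton_metric:
  assumes p: "p \<in> M"
  shows "gprod soliton_metric p u u * gprod soliton_metric p v v - (gprod soliton_metric p u v)^2
     = gram_det_poly (p$0) (p$3) u v"
proof -
  have p3: "p$3 > 0" using p by (simp add: M_def)
  have F: "F1 (p$3) > 0" using F1_pos[OF p3] .
  define iF where "iF = 1 / F1 (p$3)"
  have h: "F1 (p$3) * iF = 1" using F unfolding iF_def by simp
  have e: "1 / F1 (p$3) = iF" unfolding iF_def ..
  have e2: "\<And>z. z / F1 (p$3) = z * iF" unfolding iF_def by simp
  show ?thesis
    unfolding gprod_def soliton_metric_eq gram_det_poly_def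
    by (simp add: sum_4 metric_coeff_def kdelta_def four_eq_zero e e2) (use h in algebra)
qed

lemma riem_form_soliton_metric:
  assumes p: "p \<in> M"
  shows "(\<Sum>i\<in>UNIV. \<Sum>j\<in>UNIV. \<Sum>k\<in>UNIV. \<Sum>l\<in>UNIV. \<Sum>m\<in>UNIV.
        u $ i * v $ j * v $ k * riem soliton_metric p i j k l * soliton_metric p $ l $ m * u $ m)
     = sec_numerator_poly (p$0) (p$3) (F1 (p$3)) (F1' (p$3)) (F1'' (p$3)) u v / (4 * (p$3)^2 * F1 (p$3))"
proof -
  have p3: "p$3 > 0" using p by (simp add: M_def)
  have "(\<Sum>i\<in>UNIV. \<Sum>j\<in>UNIV. \<Sum>k\<in>UNIV. \<Sum>l\<in>UNIV. \<Sum>m\<in>UNIV.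
        u $ i * v $ j * v $ k * riem soliton_metric p i j k l * soliton_metric p $ l $ m * u $ m)
     = (\<Sum>i\<in>UNIV. \<Sum>j\<in>UNIV. \<Sum>k\<in>UNIV. \<Sum>m\<in>UNIV. u$i * v$j * v$k * u$m *
          (\<Sum>l\<in>UNIV. riem_coeff i j k l (p$0) (p$3) * metric_coeff l m (p$0) (p$3)))"
    unfolding riem_soliton_metric[OF p] soliton_metric_eq by (rule sum_riem_metric_reorder)
  also have "\<dots> = (\<Sum>i\<in>UNIV. \<Sum>j\<in>UNIV. \<Sum>k\<in>UNIV. \<Sum>m\<in>UNIV. u$i * v$j * v$k * u$m *
          riem_lowered_poly i j k m (p$0) (p$3) (F1 (p$3)) (F1' (p$3)) (F1'' (p$3)) (1 / p$3) (1 / F1 (p$3)))"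
    unfolding riem_lowered_eq[OF p3] ..
  also have "\<dots> = sec_numerator_poly (p$0) (p$3) (F1 (p$3)) (F1' (p$3)) (F1'' (p$3)) u v / (4 * (p$3)^2 * F1 (p$3))"
  proof -
    have F: "F1 (p$3) > 0" using F1_pos[OF p3] .
    have h: "4 * (p$3)^2 * F1 (p$3) * (\<Sum>i\<in>UNIV. \<Sum>j\<in>UNIV. \<Sum>k\<in>UNIV. \<Sum>m\<in>UNIV. u$i * v$j * v$k * u$m *
          riem_lowered_poly i j k m (p$0) (p$3) (F1 (p$3)) (F1' (p$3)) (F1'' (p$3)) (1 / p$3) (1 / F1 (p$3)))
       = sec_numerator_poly (p$0) (p$3) (F1 (p$3)) (F1' (p$3)) (F1'' (p$3)) u v"
      by (rule sec_numerator_poly_eq) (use p3 F in auto)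
    show ?thesis using p3 F by (simp add: h[symmetric])
  qed
  finally show ?thesis .
qed

lemma coframe_inner:
  "cf_sigma p \<bullet> u = u$0" "cf_rho p \<bullet> u = u$1" "cf_zeta p \<bullet> u = p$0 * u$1 - u$2" "cf_dphi p \<bullet> u = u$3"
  unfolding cf_sigma_def cf_rho_def cf_zeta_def cf_dphi_def inner_vec_def
  by (simp_all add: sum_4 four_eq_zero)

definition wedge :: "real^4 \<Rightarrow> real^4 \<Rightarrow> real^4 \<Rightarrow> real^4 \<Rightarrow> real" where
  "wedge \<alpha> \<beta> u v = (\<alpha> \<bullet> u) * (\<beta> \<bullet> v) - (\<alpha> \<bullet> v) * (\<beta> \<bullet> u)"

(* The components of the bivector u /\ v in the orthonormal coframe (see the header). *)
definition hor_comp :: "pt \<Rightarrow> real^4 \<Rightarrow> real^4 \<Rightarrow> real" where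
  "hor_comp p u v = p$3 * wedge (cf_sigma p) (cf_rho p) u v"

definition vert_comp :: "pt \<Rightarrow> real^4 \<Rightarrow> real^4 \<Rightarrow> real" where
  "vert_comp p u v = wedge (cf_zeta p) (cf_dphi p) u v"

definition mixed_sq :: "pt \<Rightarrow> real^4 \<Rightarrow> real^4 \<Rightarrow> real" where
  "mixed_sq p u v =
     p$3 * F1 (p$3) * ((wedge (cf_sigma p) (cf_zeta p) u v)^2 + (wedge (cf_rho p) (cf_zeta p) u v)^2)
   + p$3 / F1 (p$3) * ((wedge (cf_sigma p) (cf_dphi p) u v)^2 + (wedge (cf_rho p) (cf_dphi p) u v)^2)"

lemma plucker_relation:
  "wedge \<alpha> \<beta> u v * wedge \<gamma> \<delta> u v
     = wedge \<alpha> \<gamma> u v * wedge \<beta> \<delta> u v - wedge \<alpha> \<delta> u v * wedge \<beta> \<gamma> u v"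
  unfolding wedge_def by algebra

lemma two_abs_mult_le_mixed_sq:
  assumes "p \<in> M"
  shows "2 * \<bar>hor_comp p u v * vert_comp p u v\<bar> \<le> mixed_sq p u v"
proof -
  define f where "f = p$3"
  have "0 < f" "0 < F1 f"
    using assms F1_pos unfolding M_def f_def by auto
  define w where "w \<alpha> \<beta> = wedge \<alpha> \<beta> u v" for \<alpha> \<beta>
  let ?\<sigma> = "cf_sigma p" and ?\<rho> = "cf_rho p" and ?\<zeta> = "cf_zeta p" and ?\<phi> = "cf_dphi p"
  have "hor_comp p u v * vert_comp p u v = f * (w ?\<sigma> ?\<zeta> * w ?\<rho> ?\<phi> - w ?\<sigma> ?\<phi> * w ?\<rho> ?\<zeta>)"
    using plucker_relation[of ?\<sigma> ?\<rho> u v ?\<zeta> ?\<phi>]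
    unfolding hor_comp_def vert_comp_def w_def f_def by simp
  then have "2 * \<bar>hor_comp p u v * vert_comp p u v\<bar>
      = f * (2 * \<bar>w ?\<sigma> ?\<zeta> * w ?\<rho> ?\<phi> - w ?\<sigma> ?\<phi> * w ?\<rho> ?\<zeta>\<bar>)"
    using \<open>0 < f\<close> by (simp add: abs_mult)
  also have "\<dots> \<le> f * (2 * \<bar>w ?\<sigma> ?\<zeta> * w ?\<rho> ?\<phi>\<bar> + 2 * \<bar>w ?\<rho> ?\<zeta> * w ?\<sigma> ?\<phi>\<bar>)"
    using \<open>0 < f\<close> abs_triangle_ineq4[of "w ?\<sigma> ?\<zeta> * w ?\<rho> ?\<phi>" "w ?\<sigma> ?\<phi> * w ?\<rho> ?\<zeta>"]
    by (intro mult_left_mono) (auto simp: mult.commute)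
  also have "\<dots> \<le> f * ((F1 f * (w ?\<sigma> ?\<zeta>)^2 + (w ?\<rho> ?\<phi>)^2 / F1 f)
                    + (F1 f * (w ?\<rho> ?\<zeta>)^2 + (w ?\<sigma> ?\<phi>)^2 / F1 f))"
    using \<open>0 < f\<close> \<open>0 < F1 f\<close>
    by (intro mult_left_mono add_mono two_abs_mult_le_weighted_squares) auto
  also have "\<dots> = mixed_sq p u v"
    unfolding mixed_sq_def w_def f_def by (simp add: algebra_simps)
  finally show ?thesis .
qed

lemma sec_curv_soliton_metric:
  assumes "p \<in> M"
  shows "sec_curv soliton_metric p u v =
    (curv_hor (p$3) * (hor_comp p u v)^2 + curv_vert (p$3) * (vert_comp p u v)^2
      + 6 * curv_mix (p$3) * hor_comp p u v * vert_comp p u v - curv_mix (p$3) * mixed_sq p u v)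
    / ((hor_comp p u v)^2 + (vert_comp p u v)^2 + mixed_sq p u v)"
proof -
  define f where "f = p$3"
  have "0 < f" "0 < F1 f"
    using assms F1_pos unfolding M_def f_def by auto
  define i1 where "i1 = 1 / f"
  define i2 where "i2 = 1 / F1 f"
  have inv: "f * i1 = 1" "F1 f * i2 = 1"
    using \<open>0 < f\<close> \<open>0 < F1 f\<close> unfolding i1_def i2_def by simp_all
  have div: "\<And>z. z / F1 f = z * i2" "\<And>z. z / f^2 = z * i1^2" "\<And>z. z / (4 * f^2) = z * i1^2 / 4"
    unfolding i1_def i2_def by (simp_all add: power2_eq_square)
  have gram: "gram_det_poly (p$0) f u v = (hor_comp p u v)^2 + (vert_comp p u v)^2 + mixed_sq p u v"
    unfolding gram_det_poly_def hor_comp_def vert_comp_def mixed_sq_def wedge_def coframe_inner f_def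
    unfolding div by algebra
  have num: "sec_numerator_poly (p$0) f (F1 f) (F1' f) (F1'' f) u v = 4 * f^2 * F1 f *
    (curv_hor f * (hor_comp p u v)^2 + curv_vert f * (vert_comp p u v)^2
      + 6 * curv_mix f * hor_comp p u v * vert_comp p u v - curv_mix f * mixed_sq p u v)"
    unfolding sec_numerator_poly_def curv_hor_def curv_vert_def curv_mix_def
      hor_comp_def vert_comp_def mixed_sq_def wedge_def coframe_inner f_def[symmetric]
    unfolding div using inv by algebra
  show ?thesis
    unfolding sec_curv_def riem_form_soliton_metric[OF assms] gram_det_soliton_metric[OF assms]
    unfolding f_def[symmetric] num gram using \<open>0 < f\<close> \<open>0 < F1 f\<close> by simp
qed

lemma coframe_wedges_zero_imp_not_plane_pair:
  assumes "wedge (cf_sigma p) (cf_rho p) u v = 0" "wedge (cf_zeta p) (cf_dphi p) u v = 0"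
    "wedge (cf_sigma p) (cf_zeta p) u v = 0" "wedge (cf_rho p) (cf_zeta p) u v = 0"
    "wedge (cf_sigma p) (cf_dphi p) u v = 0" "wedge (cf_rho p) (cf_dphi p) u v = 0"
  shows "\<not> plane_pair u v"
proof
  assume "plane_pair u v"
  then have "u \<noteq> v" "independent {u, v}"
    unfolding plane_pair_def by auto
  then have "u \<noteq> 0"
    using dependent_zero[of "{u, v}"] by auto
  define coord :: "real^4 \<Rightarrow> real^4" where
    "coord w = (\<chi> i. if i = 2 then p$0 * w$1 - w$2 else w$i)" for w
  have coord_nth: "coord w $ 0 = w $ 0" "coord w $ 1 = w $ 1" "coord w $ 2 = p$0 * w$1 - w$2" "coord w $ 3 = w $ 3" for w
    unfolding coord_def by simp_all
  have "coord u $ i * coord v $ j = coord u $ j * coord v $ i" for i j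
    using assms exhaust_4[of i] exhaust_4[of j]
    unfolding wedge_def coframe_inner coord_def four_eq_zero by (auto simp: algebra_simps)
  moreover obtain k where "coord u $ k \<noteq> 0"
  proof -
    have "coord u \<noteq> 0"
      using \<open>u \<noteq> 0\<close> unfolding vec_eq_iff forall_4 four_eq_zero coord_nth by auto
    then show ?thesis
      using that by (auto simp: vec_eq_iff)
  qed
  ultimately obtain t where "coord v = t *\<^sub>R coord u"
    using scaleR_eq_if_minors_zero by blast
  then have "coord v $ i = t * coord u $ i" for i
    by simp
  from this[of 0] this[of 1] this[of 2] this[of 3] have "v = t *\<^sub>R u"
    unfolding vec_eq_iff forall_4 four_eq_zero coord_nth by (auto simp: algebra_simps)
  then have "v \<in> span {u}"
    by (metis span_base span_mul singletonI scaleR_conv_of_real)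
  with \<open>u \<noteq> v\<close> have "dependent {u, v}"
    unfolding dependent_def by (intro bexI[of _ v]) (auto simp: insert_Diff_if)
  with \<open>independent {u, v}\<close> show False by simp
qed

lemma plane_norm_sq_pos:
  assumes "p \<in> M" and "plane_pair u v"
  shows "0 < (hor_comp p u v)^2 + (vert_comp p u v)^2 + mixed_sq p u v"
proof (rule ccontr)
  assume not_pos: "\<not> ?thesis"
  define f where "f = p$3"
  have "0 < f" "0 < F1 f"
    using assms F1_pos unfolding M_def f_def by auto
  then have "0 \<le> mixed_sq p u v"
    unfolding mixed_sq_def f_def[symmetric] by simp
  moreover have "0 \<le> (hor_comp p u v)^2" "0 \<le> (vert_comp p u v)^2"
    by simp_all
  ultimately have "(hor_comp p u v)^2 = 0" "(vert_comp p u v)^2 = 0" "mixed_sq p u v = 0"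
    using not_pos by linarith+
  then have "hor_comp p u v = 0" "vert_comp p u v = 0" "mixed_sq p u v = 0"
    by simp_all
  with \<open>0 < f\<close> \<open>0 < F1 f\<close> have "\<not> plane_pair u v"
    unfolding hor_comp_def vert_comp_def mixed_sq_def f_def[symmetric]
    by (intro coframe_wedges_zero_imp_not_plane_pair) (auto simp: add_nonneg_eq_0_iff)
  with assms show False by simp
qed

lemma sec_curv_soliton_metric_bounds:
  assumes "p \<in> M" and "plane_pair u v"
  shows "- (2/3) < sec_curv soliton_metric p u v \<and> sec_curv soliton_metric p u v < 0"
proof -
  define f where "f = p$3"
  have "0 < f"
    using assms unfolding M_def f_def by simp
  have bounds: "- (2/3) * (a^2 + b^2 + s) < curv_hor f * a^2 + curv_vert f * b^2 + 6 * curv_mix f * a * b - curv_mix f * s"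
    "curv_hor f * a^2 + curv_vert f * b^2 + 6 * curv_mix f * a * b - curv_mix f * s < 0"
    if "2 * \<bar>a * b\<bar> \<le> s" "0 < a^2 + b^2 + s" for a b s
    using curvature_form_gt curvature_form_neg curv_hor_bounds curv_vert_bounds curv_mix_bounds
      curv_mix_sq_less \<open>0 < f\<close> that by (simp_all add: less_imp_le)
  show ?thesis
    unfolding sec_curv_soliton_metric[OF assms(1)] f_def[symmetric]
    using bounds[OF two_abs_mult_le_mixed_sq[OF assms(1)] plane_norm_sq_pos[OF assms]]
      plane_norm_sq_pos[OF assms] by (simp add: divide_less_eq less_divide_eq)
qed

lemma axis_3_in_M: "0 < e \<Longrightarrow> axis 3 e \<in> M"
  unfolding M_def by simp

lemma plane_pair_axis: "i \<noteq> j \<Longrightarrow> plane_pair (axis i (1::real)) (axis j 1)"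
proof -
  assume "i \<noteq> j"
  have "independent {axis i (1::real), axis j 1}"
    by (rule independent_mono[OF independent_Basis]) auto
  with \<open>i \<noteq> j\<close> show ?thesis
    unfolding plane_pair_def by (auto simp: axis_eq_axis)
qed

lemma sec_curv_soliton_metric_hor_plane:
  "0 < e \<Longrightarrow> sec_curv soliton_metric (axis 3 e) (axis 0 1) (axis 1 1) = curv_hor e"
proof -
  assume "0 < e"
  have "hor_comp (axis 3 e) (axis 0 1) (axis 1 1) = e" "vert_comp (axis 3 e) (axis 0 1) (axis 1 1) = 0"
    "mixed_sq (axis 3 e) (axis 0 1) (axis 1 1) = 0"
    by (simp_all add: hor_comp_def vert_comp_def mixed_sq_def wedge_def coframe_inner axis_def)
  with \<open>0 < e\<close> show ?thesis
    unfolding sec_curv_soliton_metric[OF axis_3_in_M[OF \<open>0 < e\<close>]] by (simp add: power2_eq_square)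
qed

lemma sec_curv_soliton_metric_mixed_plane:
  "0 < e \<Longrightarrow> sec_curv soliton_metric (axis 3 e) (axis 0 1) (axis 2 1) = - curv_mix e"
proof -
  assume "0 < e"
  have "hor_comp (axis 3 e) (axis 0 1) (axis 2 1) = 0" "vert_comp (axis 3 e) (axis 0 1) (axis 2 1) = 0"
    "mixed_sq (axis 3 e) (axis 0 1) (axis 2 1) = e * F1 e"
    by (simp_all add: hor_comp_def vert_comp_def mixed_sq_def wedge_def coframe_inner axis_def)
  with \<open>0 < e\<close> F1_pos[OF \<open>0 < e\<close>] show ?thesis
    unfolding sec_curv_soliton_metric[OF axis_3_in_M[OF \<open>0 < e\<close>]] by simp
qed

theorem mainTheorem10:
  shows "(\<forall>p\<in>M. \<forall>u v. plane_pair u v \<longrightarrow>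
            - (2/3) < sec_curv soliton_metric p u v \<and> sec_curv soliton_metric p u v < 0)
       \<and> Inf {sec_curv soliton_metric p u v | p u v. p \<in> M \<and> plane_pair u v} = - (2/3)
       \<and> Sup {sec_curv soliton_metric p u v | p u v. p \<in> M \<and> plane_pair u v} = 0"
proof -
  let ?K = "{sec_curv soliton_metric p u v | p u v. p \<in> M \<and> plane_pair u v}"
  have bounds: "\<forall>p\<in>M. \<forall>u v. plane_pair u v \<longrightarrow>
            - (2/3) < sec_curv soliton_metric p u v \<and> sec_curv soliton_metric p u v < 0"
    using sec_curv_soliton_metric_bounds by blast
  have hor: "curv_hor e \<in> ?K" and mixed: "- curv_mix e \<in> ?K" if "0 < e" for e
  proof -
    have "sec_curv soliton_metric (axis 3 e) (axis 0 1) (axis 1 1) \<in> ?K"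
      "sec_curv soliton_metric (axis 3 e) (axis 0 1) (axis 2 1) \<in> ?K"
      using axis_3_in_M[OF that] plane_pair_axis[of 0 1] plane_pair_axis[of 0 2] by auto
    then show "curv_hor e \<in> ?K" "- curv_mix e \<in> ?K"
      unfolding sec_curv_soliton_metric_hor_plane[OF that] sec_curv_soliton_metric_mixed_plane[OF that] .
  qed
  have "Inf ?K = - (2/3)"
  proof (rule cInf_eq_approx)
    show "- (2/3) \<le> x" if "x \<in> ?K" for x
      using that bounds by fastforce
    show "\<exists>x\<in>?K. x < - (2/3) + e" if "0 < e" for e
      using hor[OF that] curv_hor_less[OF that] that by (intro bexI) auto
  qed
  moreover have "Sup ?K = 0"
  proof (rule cSup_eq_approx)
    show "x \<le> 0" if "x \<in> ?K" for x
      using that bounds by fastforce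
    show "\<exists>x\<in>?K. 0 - e < x" if "0 < e" for e
      using ex_curv_mix_less[OF that] mixed by fastforce
  qed
  ultimately show ?thesis
    using bounds by blast
qed

end
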